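(* Let $\Phi(z,w)=\sum_{n,m=0}^\infty a_{nm}z^nw^m$ be an entire function on $\mathbb{C}^2$ (the series converging on all of $\mathbb{C}^2$), and define $\varphi(\zeta)=\Phi(\zeta,\bar\zeta)=\sum_{n,m\ge0}a_{nm}\zeta^n\bar\zeta^m$ for $\zeta\in\mathbb{C}$. Let $\Delta=\{|\zeta|\le1\}$, $\Gamma=\{|\zeta|=1\}$, $\gamma=\{(\zeta,\varphi(\zeta)):\zeta\in\Gamma\}\subset\mathbb{C}^2$ and $\Sigma=\{(\zeta,\varphi(\zeta)):\zeta\in\Delta\}\subset\mathbb{C}^2$. If $\Sigma\subset\widehat\gamma$, where $\widehat\gamma$ is the projective hull of $\gamma$, then $\varphi$ is a holomorphic function of $\zeta$ on $\operatorname{int}\Delta$ (in particular on $\operatorname{int}\Delta\setminus\{0\}$, with a removable singularity at $\zeta=0$).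
   Context: For a compact set $X\subset\mathbb{C}^n$, let $\mathcal{P}_d$ denote the space of complex polynomials on $\mathbb{C}^n$ of degree at most $d$. The projective hull $\widehat X$ of $X$ is the set of points $x\in\mathbb{C}^n$ for which there exists a constant $C_x$ such that $|P(x)|\le (C_x)^d\sup_X|P|$ for all $P\in\mathcal{P}_d$ and all $d\ge0$. *)

theory Defs
  imports "HOL-Complex_Analysis.Complex_Analysis"
begin

definition poly2 :: "nat \<Rightarrow> (nat \<Rightarrow> nat \<Rightarrow> complex) \<Rightarrow> complex \<times> complex \<Rightarrow> complex" where
  "poly2 d c p = (\<Sum>i\<le>d. \<Sum>j\<le>d - i. c i j * fst p ^ i * snd p ^ j)"

definition proj_hull :: "(complex \<times> complex) set \<Rightarrow> (complex \<times> complex) set" where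
  "proj_hull X = {x. \<exists>C::real. \<forall>d c. cmod (poly2 d c x) \<le> C ^ d * (SUP y\<in>X. cmod (poly2 d c y))}"

end

theory Submission
  imports Defs
begin

text \<open>
  Write Phi_N for the partial sum of Phi over n, m <= N. The polynomial
  P_N(z, w) = z^N w - sum_{n,m<=N} a_nm z^(n+N-m), of degree 2N + 1, equals
  z^N (w - Phi_N(z, 1/z)) whenever z is nonzero. On the unit circle cnj z = 1/z, so on gamma the
  polynomial P_N is bounded by a tail of the majorant series of Phi, and these tails decay faster
  than any geometric sequence because Phi is entire. For (z, w) in the projective hull the estimate
  |P_N(z, w)| <= C^(2N+1) sup_gamma |P_N| therefore forces Phi_N(z, 1/z) --> w, that is
  w = Phi(z, 1/z). Hence phi(z) = Phi(z, 1/z) is holomorphic on the punctured disc, and the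
  continuity of phi at 0 removes the singularity.
\<close>

definition dseries :: "(nat \<Rightarrow> nat \<Rightarrow> complex) \<Rightarrow> complex \<Rightarrow> complex \<Rightarrow> complex" where
  "dseries a z w = (\<Sum>\<^sub>\<infinity>(n, m). a n m * z ^ n * w ^ m)"

definition dpartial :: "(nat \<Rightarrow> nat \<Rightarrow> complex) \<Rightarrow> nat \<Rightarrow> complex \<Rightarrow> complex \<Rightarrow> complex" where
  "dpartial a N z w = (\<Sum>(n, m)\<in>{..N} \<times> {..N}. a n m * z ^ n * w ^ m)"

definition majorant_tail :: "(nat \<Rightarrow> nat \<Rightarrow> complex) \<Rightarrow> nat \<Rightarrow> real \<Rightarrow> real" where
  "majorant_tail a N M = (\<Sum>\<^sub>\<infinity>(n, m)\<in>-({..N} \<times> {..N}). cmod (a n m) * M ^ (n + m))"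

lemma poly2_diff: "poly2 d (\<lambda>i j. c i j - c' i j) p = poly2 d c p - poly2 d c' p"
  unfolding poly2_def by (simp add: algebra_simps sum_subtractf)

lemma poly2_sum: "poly2 d (\<lambda>i j. \<Sum>k\<in>F. c k i j) p = (\<Sum>k\<in>F. poly2 d (c k) p)"
  unfolding poly2_def by (simp add: sum_distrib_right sum.swap[of _ F])

lemma poly2_monomial:
  assumes "i0 + j0 \<le> d"
  shows "poly2 d (\<lambda>i j. if i = i0 \<and> j = j0 then b else 0) p = b * fst p ^ i0 * snd p ^ j0"
proof -
  have "(\<Sum>j\<le>d - i. (if i = i0 \<and> j = j0 then b else 0) * fst p ^ i * snd p ^ j)
      = (if i = i0 then b * fst p ^ i0 * snd p ^ j0 else 0)" for i
    using assms by (cases "i = i0") (simp_all add: if_distrib[of "\<lambda>x. x * _"] sum.delta cong: if_cong)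
  then show ?thesis
    using assms unfolding poly2_def by (simp add: sum.delta)
qed

lemma proj_hull_bound:
  assumes "x \<in> proj_hull X" "X \<noteq> {}"
  obtains B where "B \<ge> 0"
    "\<And>d c b. (\<And>y. y \<in> X \<Longrightarrow> cmod (poly2 d c y) \<le> b) \<Longrightarrow> cmod (poly2 d c x) \<le> B ^ d * b"
proof -
  obtain C where C: "\<And>d c. cmod (poly2 d c x) \<le> C ^ d * (SUP y\<in>X. cmod (poly2 d c y))"
    using assms(1) unfolding proj_hull_def by blast
  have "cmod (poly2 d c x) \<le> \<bar>C\<bar> ^ d * b"
    if b: "\<And>y. y \<in> X \<Longrightarrow> cmod (poly2 d c y) \<le> b" for d c b
  proof -
    let ?S = "SUP y\<in>X. cmod (poly2 d c y)"
    obtain y where "y \<in> X"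
      using assms(2) by blast
    have "?S \<le> b"
      using b assms(2) by (intro cSUP_least) auto
    moreover have "?S \<ge> 0"
      using b \<open>y \<in> X\<close> by (intro cSUP_upper2[where x = y] bdd_aboveI2[where M = b]) auto
    moreover have "C ^ d \<le> \<bar>C\<bar> ^ d"
      by (metis abs_ge_self power_abs)
    ultimately have "C ^ d * ?S \<le> \<bar>C\<bar> ^ d * b"
      by (intro mult_mono) auto
    then show ?thesis
      using C order_trans by blast
  qed
  then show ?thesis
    by (intro that[of "\<bar>C\<bar>"]) auto
qed

text \<open>The coefficients of P_N(z, w) = z^N w - sum_{n,m<=N} a_nm z^(n+N-m).\<close>
definition laurent_defect_coeff :: "(nat \<Rightarrow> nat \<Rightarrow> complex) \<Rightarrow> nat \<Rightarrow> nat \<Rightarrow> nat \<Rightarrow> complex" where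
  "laurent_defect_coeff a N i j = (if i = N \<and> j = 1 then 1 else 0)
     - (\<Sum>(n, m)\<in>{..N} \<times> {..N}. if i = n + N - m \<and> j = 0 then a n m else 0)"

lemma poly2_laurent_defect_coeff:
  assumes "z \<noteq> 0"
  shows "poly2 (2 * N + 1) (laurent_defect_coeff a N) (z, w) = z ^ N * (w - dpartial a N z (1 / z))"
proof -
  have "z ^ (n + N - m) = z ^ N * (z ^ n * (1 / z) ^ m)" if "m \<le> N" for n m
  proof -
    have "z ^ (n + N - m) * z ^ m = z ^ N * z ^ n"
      using that by (simp add: ac_simps flip: power_add)
    then show ?thesis
      using assms by (simp add: field_simps)
  qed
  then have "poly2 (2 * N + 1) (\<lambda>i j. \<Sum>(n, m)\<in>{..N} \<times> {..N}. if i = n + N - m \<and> j = 0 then a n m else 0) (z, w)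
      = z ^ N * dpartial a N z (1 / z)"
    by (auto simp: poly2_sum case_prod_unfold poly2_monomial dpartial_def sum_distrib_left
        mult_ac intro!: sum.cong)
  then show ?thesis
    unfolding laurent_defect_coeff_def poly2_diff by (simp add: poly2_monomial right_diff_distrib)
qed

locale entire_double_series =
  fixes a :: "nat \<Rightarrow> nat \<Rightarrow> complex"
  assumes summable_everywhere: "\<And>z w. (\<lambda>(n, m). a n m * z ^ n * w ^ m) summable_on UNIV"
begin

lemma summable_on_terms: "(\<lambda>(n, m). a n m * z ^ n * w ^ m) summable_on A"
  using summable_on_subset_banach[OF summable_everywhere] by blast

lemma majorant_summable:
  assumes "M \<ge> 0"
  shows "(\<lambda>(n, m). cmod (a n m) * M ^ (n + m)) summable_on A"
proof -
  have "(\<lambda>k. norm ((\<lambda>(n, m). a n m * of_real M ^ n * of_real M ^ m) k)) summable_on A"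
    using summable_on_terms summable_on_iff_abs_summable_on_complex by blast
  then show ?thesis
    using assms by (simp add: case_prod_unfold norm_mult norm_power power_add mult.assoc)
qed

lemma norm_dseries_minus_dpartial:
  assumes "norm z \<le> M" "norm w \<le> M"
  shows "norm (dseries a z w - dpartial a N z w) \<le> majorant_tail a N M"
proof -
  let ?f = "\<lambda>(n, m). a n m * z ^ n * w ^ m" and ?T = "-({..N} \<times> {..N})"
  have M: "M \<ge> 0"
    using assms(1) norm_ge_zero order_trans by blast
  have abs: "(\<lambda>k. norm (?f k)) summable_on ?T"
    using summable_on_terms summable_on_iff_abs_summable_on_complex by blast
  have "dseries a z w = infsum ?f ({..N} \<times> {..N} \<union> ?T)"
    by (simp add: dseries_def)
  also have "\<dots> = infsum ?f ({..N} \<times> {..N}) + infsum ?f ?T"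
    by (rule infsum_Un_disjoint[OF summable_on_terms summable_on_terms]) simp
  also have "infsum ?f ({..N} \<times> {..N}) = dpartial a N z w"
    by (simp add: dpartial_def)
  finally have "norm (dseries a z w - dpartial a N z w) = norm (infsum ?f ?T)"
    by simp
  also have "\<dots> \<le> (\<Sum>\<^sub>\<infinity>k\<in>?T. norm (?f k))"
    by (rule norm_infsum_le[OF has_sum_infsum[OF summable_on_terms] has_sum_infsum[OF abs]]) simp
  also have "\<dots> \<le> majorant_tail a N M"
    unfolding majorant_tail_def
  proof (rule infsum_mono[OF abs majorant_summable[OF M]])
    fix k :: "nat \<times> nat"
    obtain n m where k: "k = (n, m)" by (cases k)
    have "norm z ^ n * norm w ^ m \<le> M ^ n * M ^ m"
      using assms M by (intro mult_mono power_mono) auto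
    then show "norm (?f k) \<le> (case k of (n, m) \<Rightarrow> cmod (a n m) * M ^ (n + m))"
      by (simp add: k norm_mult norm_power power_add mult.assoc mult_left_mono)
  qed
  finally show ?thesis .
qed

lemma majorant_tail_le:
  assumes "R \<ge> 1" "M \<ge> 0"
  shows "majorant_tail a N M \<le> (\<Sum>\<^sub>\<infinity>(n, m). cmod (a n m) * (R * M) ^ (n + m)) / R ^ (N + 1)"
proof -
  let ?g = "\<lambda>(n, m). cmod (a n m) * (R * M) ^ (n + m)" and ?T = "-({..N} \<times> {..N})"
  have RM: "R * M \<ge> 0" using assms by simp
  have "majorant_tail a N M \<le> (\<Sum>\<^sub>\<infinity>k\<in>?T. ?g k / R ^ (N + 1))"
    unfolding majorant_tail_def
  proof (rule infsum_mono)
    show "(\<lambda>(n, m). cmod (a n m) * M ^ (n + m)) summable_on ?T"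
      using assms by (intro majorant_summable)
    show "(\<lambda>k. ?g k / R ^ (N + 1)) summable_on ?T"
      using summable_on_cmult_left[OF majorant_summable[OF RM], where c = "inverse (R ^ (N + 1))"]
      by (simp add: divide_inverse case_prod_unfold)
    fix k assume "k \<in> ?T"
    then obtain n m where k: "k = (n, m)" and nm: "N + 1 \<le> n + m" by (cases k) auto
    have "R ^ (N + 1) * M ^ (n + m) \<le> R ^ (n + m) * M ^ (n + m)"
      using assms nm by (intro mult_right_mono power_increasing) auto
    then have "M ^ (n + m) \<le> (R * M) ^ (n + m) / R ^ (N + 1)"
      using assms by (simp add: pos_le_divide_eq power_mult_distrib mult.commute)
    then show "(case k of (n, m) \<Rightarrow> cmod (a n m) * M ^ (n + m)) \<le> ?g k / R ^ (N + 1)"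
      by (simp add: k mult_left_mono flip: times_divide_eq_right)
  qed
  also have "\<dots> = (\<Sum>\<^sub>\<infinity>k\<in>?T. ?g k) / R ^ (N + 1)"
    by (simp add: divide_inverse infsum_cmult_left')
  also have "\<dots> \<le> (\<Sum>\<^sub>\<infinity>k. ?g k) / R ^ (N + 1)"
    using assms RM
    by (intro divide_right_mono infsum_mono_neutral majorant_summable) auto
  finally show ?thesis .
qed

lemma majorant_tail_nonneg: "M \<ge> 0 \<Longrightarrow> majorant_tail a N M \<ge> 0"
  unfolding majorant_tail_def by (intro infsum_nonneg) auto

lemma majorant_tail_superexponential:
  assumes "q \<ge> 0" "M \<ge> 0"
  shows "(\<lambda>N. q ^ N * majorant_tail a N M) \<longlonglongrightarrow> 0"
proof -
  define R where "R = q + 1"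
  define A where "A = (\<Sum>\<^sub>\<infinity>(n, m). cmod (a n m) * (R * M) ^ (n + m))"
  have R: "R \<ge> 1" "q / R < 1" using assms by (auto simp: R_def)
  have bound: "norm (q ^ N * majorant_tail a N M) \<le> A / R * (q / R) ^ N" for N
  proof -
    have "norm (q ^ N * majorant_tail a N M) = q ^ N * majorant_tail a N M"
      using assms majorant_tail_nonneg by simp
    also have "\<dots> \<le> q ^ N * (A / R ^ (N + 1))"
      using assms by (intro mult_left_mono majorant_tail_le[OF R(1) assms(2), folded A_def]) simp
    also have "\<dots> = A / R * (q / R) ^ N"
      by (simp add: power_divide mult.commute)
    finally show ?thesis .
  qed
  have "(\<lambda>N. A / R * (q / R) ^ N) \<longlonglongrightarrow> 0"
    using assms R by (intro tendsto_mult_right_zero LIMSEQ_power_zero) simp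
  then show ?thesis
    by (rule Lim_null_comparison[OF always_eventually, OF allI, OF bound])
qed

lemma dpartial_uniform_limit:
  assumes "M \<ge> 0" and bound: "\<And>\<zeta>. \<zeta> \<in> S \<Longrightarrow> norm \<zeta> \<le> M \<and> norm (w \<zeta>) \<le> M"
  shows "uniform_limit S (\<lambda>N \<zeta>. dpartial a N \<zeta> (w \<zeta>)) (\<lambda>\<zeta>. dseries a \<zeta> (w \<zeta>)) sequentially"
  unfolding uniform_limit_iff
proof (intro allI impI)
  fix e :: real assume "e > 0"
  with majorant_tail_superexponential[of 1 M] assms(1)
  have "\<forall>\<^sub>F N in sequentially. majorant_tail a N M < e"
    by (auto dest: order_tendstoD(2))
  then show "\<forall>\<^sub>F N in sequentially. \<forall>\<zeta>\<in>S. dist (dpartial a N \<zeta> (w \<zeta>)) (dseries a \<zeta> (w \<zeta>)) < e"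
  proof eventually_elim
    case (elim N)
    show ?case
    proof
      fix \<zeta> assume "\<zeta> \<in> S"
      then have "dist (dpartial a N \<zeta> (w \<zeta>)) (dseries a \<zeta> (w \<zeta>)) \<le> majorant_tail a N M"
        using bound norm_dseries_minus_dpartial by (simp add: dist_norm norm_minus_commute)
      with elim show "dist (dpartial a N \<zeta> (w \<zeta>)) (dseries a \<zeta> (w \<zeta>)) < e"
        by linarith
    qed
  qed
qed

lemma dpartial_tendsto: "(\<lambda>N. dpartial a N z w) \<longlonglongrightarrow> dseries a z w"
proof -
  have "uniform_limit {z} (\<lambda>N \<zeta>. dpartial a N \<zeta> w) (\<lambda>\<zeta>. dseries a \<zeta> w) sequentially"
    by (rule dpartial_uniform_limit[of "max (norm z) (norm w)"]) (auto intro: max.coboundedI1)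
  then show ?thesis
    using tendsto_uniform_limitI by fastforce
qed

lemma dpartial_uniform_limit_compact:
  assumes "compact S" "continuous_on S w"
  shows "uniform_limit S (\<lambda>N \<zeta>. dpartial a N \<zeta> (w \<zeta>)) (\<lambda>\<zeta>. dseries a \<zeta> (w \<zeta>)) sequentially"
proof -
  have "bounded (S \<union> w ` S)"
    unfolding bounded_Un using assms by (blast intro: compact_imp_bounded compact_continuous_image)
  then obtain M where "M > 0" "\<And>x. x \<in> S \<union> w ` S \<Longrightarrow> norm x \<le> M"
    by (auto simp: bounded_pos)
  then show ?thesis
    by (intro dpartial_uniform_limit[of M]) auto
qed

lemma continuous_on_dseries:
  assumes "compact S" "continuous_on S w"
  shows "continuous_on S (\<lambda>\<zeta>. dseries a \<zeta> (w \<zeta>))"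
proof (rule uniform_limit_theorem[OF always_eventually dpartial_uniform_limit_compact[OF assms]])
  show "\<forall>N. continuous_on S (\<lambda>\<zeta>. dpartial a N \<zeta> (w \<zeta>))"
    using assms(2) unfolding dpartial_def case_prod_unfold by (intro allI continuous_intros)
qed simp

lemma holomorphic_on_dseries:
  assumes "open S" "w holomorphic_on S"
  shows "(\<lambda>\<zeta>. dseries a \<zeta> (w \<zeta>)) holomorphic_on S"
proof (rule holomorphic_uniform_sequence[OF assms(1)])
  show "(\<lambda>\<zeta>. dpartial a N \<zeta> (w \<zeta>)) holomorphic_on S" for N
    using assms(2) unfolding dpartial_def case_prod_unfold by (intro holomorphic_intros)
  fix z assume "z \<in> S"
  then obtain d where d: "d > 0" "cball z d \<subseteq> S"
    using assms(1) open_contains_cball by blast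
  then have "continuous_on (cball z d) w"
    using assms(2) holomorphic_on_imp_continuous_on continuous_on_subset by blast
  with d show "\<exists>d>0. cball z d \<subseteq> S \<and>
      uniform_limit (cball z d) (\<lambda>N \<zeta>. dpartial a N \<zeta> (w \<zeta>)) (\<lambda>\<zeta>. dseries a \<zeta> (w \<zeta>)) sequentially"
    using dpartial_uniform_limit_compact compact_cball by blast
qed

lemma proj_hull_circle_graph_eq_laurent:
  assumes hull: "(\<zeta>, w) \<in> proj_hull ((\<lambda>u. (u, dseries a u (cnj u))) ` sphere 0 1)"
    and "\<zeta> \<noteq> 0"
  shows "w = dseries a \<zeta> (1 / \<zeta>)"
proof -
  let ?\<gamma> = "(\<lambda>u. (u, dseries a u (cnj u))) ` sphere 0 1"
  let ?P = "\<lambda>N. poly2 (2 * N + 1) (laurent_defect_coeff a N)"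
  have "?\<gamma> \<noteq> {}"
    by (simp add: sphere_def) (metis norm_one)
  then obtain B where "B \<ge> 0"
    and B: "\<And>d c b. (\<And>y. y \<in> ?\<gamma> \<Longrightarrow> cmod (poly2 d c y) \<le> b) \<Longrightarrow> cmod (poly2 d c (\<zeta>, w)) \<le> B ^ d * b"
    using proj_hull_bound[OF hull] by metis
  have on_\<gamma>: "cmod (?P N y) \<le> majorant_tail a N 1" if y: "y \<in> ?\<gamma>" for N y
  proof -
    obtain u where u: "norm u = 1" and y_eq: "y = (u, dseries a u (cnj u))"
      using y by auto
    have cnj_u: "cnj u = 1 / u"
      using divide_conv_cnj[OF u, of 1] by simp
    have "u \<noteq> 0"
      using u by auto
    then have "cmod (?P N y) = norm (dseries a u (1 / u) - dpartial a N u (1 / u))"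
      unfolding y_eq cnj_u poly2_laurent_defect_coeff[OF \<open>u \<noteq> 0\<close>] by (simp add: norm_mult norm_power u)
    also have "\<dots> \<le> majorant_tail a N 1"
      using u by (intro norm_dseries_minus_dpartial) (auto simp: norm_divide)
    finally show ?thesis .
  qed
  have bound: "norm (dpartial a N \<zeta> (1 / \<zeta>) - w) \<le> B * ((B\<^sup>2 / norm \<zeta>) ^ N * majorant_tail a N 1)" for N
  proof -
    have "norm \<zeta> ^ N * norm (w - dpartial a N \<zeta> (1 / \<zeta>)) = cmod (?P N (\<zeta>, w))"
      using \<open>\<zeta> \<noteq> 0\<close> by (subst poly2_laurent_defect_coeff) (auto simp: norm_mult norm_power)
    also have "\<dots> \<le> B ^ (2 * N + 1) * majorant_tail a N 1"
      by (rule B) (rule on_\<gamma>)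
    also have "\<dots> = norm \<zeta> ^ N * (B * ((B\<^sup>2 / norm \<zeta>) ^ N * majorant_tail a N 1))"
    proof -
      have "norm \<zeta> ^ N * (B\<^sup>2 / norm \<zeta>) ^ N = B ^ (2 * N)"
        using \<open>\<zeta> \<noteq> 0\<close> by (simp add: power_divide flip: power_mult)
      then show ?thesis
        by (simp add: mult_ac)
    qed
    finally show ?thesis
      using \<open>\<zeta> \<noteq> 0\<close> by (simp add: norm_minus_commute)
  qed
  have "(\<lambda>N. B * ((B\<^sup>2 / norm \<zeta>) ^ N * majorant_tail a N 1)) \<longlonglongrightarrow> 0"
    using \<open>B \<ge> 0\<close> by (intro tendsto_mult_right_zero majorant_tail_superexponential) auto
  then have "(\<lambda>N. dpartial a N \<zeta> (1 / \<zeta>) - w) \<longlonglongrightarrow> 0"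
    by (rule Lim_null_comparison[OF always_eventually, OF allI, OF bound])
  then have "(\<lambda>N. dpartial a N \<zeta> (1 / \<zeta>)) \<longlonglongrightarrow> w"
    by (rule LIM_zero_cancel)
  then show ?thesis
    using dpartial_tendsto LIMSEQ_unique by blast
qed

end

theorem theorem5:
  fixes a :: "nat \<Rightarrow> nat \<Rightarrow> complex" and \<phi> :: "complex \<Rightarrow> complex"
  assumes entire: "\<And>z w. (\<lambda>(n, m). a n m * z ^ n * w ^ m) summable_on UNIV"
    and phi_def: "\<And>\<zeta>. \<phi> \<zeta> = (\<Sum>\<^sub>\<infinity>(n, m). a n m * \<zeta> ^ n * cnj \<zeta> ^ m)"
    and hull: "(\<lambda>\<zeta>. (\<zeta>, \<phi> \<zeta>)) ` cball 0 1 \<subseteq> proj_hull ((\<lambda>\<zeta>. (\<zeta>, \<phi> \<zeta>)) ` sphere 0 1)"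
  shows "\<phi> holomorphic_on ball 0 1"
proof -
  interpret entire_double_series a
    using entire by unfold_locales
  have \<phi>: "\<phi> = (\<lambda>\<zeta>. dseries a \<zeta> (cnj \<zeta>))"
    using phi_def by (auto simp: dseries_def)
  have "\<phi> holomorphic_on ball 0 1 - {0}"
  proof (rule holomorphic_transform)
    show "(\<lambda>\<zeta>. dseries a \<zeta> (1 / \<zeta>)) holomorphic_on ball 0 1 - {0}"
      by (intro holomorphic_on_dseries holomorphic_intros) auto
    show "dseries a \<zeta> (1 / \<zeta>) = \<phi> \<zeta>" if "\<zeta> \<in> ball 0 1 - {0}" for \<zeta>
      using that hull unfolding \<phi> by (intro proj_hull_circle_graph_eq_laurent[symmetric]) auto
  qed
  moreover have "continuous_on (cball 0 1) \<phi>"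
    unfolding \<phi> by (intro continuous_on_dseries continuous_intros) simp
  then have "(\<phi> \<longlongrightarrow> \<phi> 0) (at 0 within ball 0 1)"
    using ball_subset_cball continuous_on_subset unfolding continuous_on_def by fastforce
  ultimately show ?thesis
    using no_isolated_singularity'[of "{0}" \<phi> "ball 0 1"] by simp
qed

end
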